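(* Let $\mathcal T^*$ be an Aronszajn tree and let $B$ be an uncountable set of branches of $\mathcal T^*$ such that no two elements of $B$ have the same order type. Then there are incompatible elements $s,t\in\mathcal T^*$ such that both $\{b\in B:s\in b\}$ and $\{b\in B:t\in b\}$ are uncountable.
   Context: An Aronszajn tree is a tree of height $\omega_1$ all of whose levels are countable and which has no uncountable branch. A branch is a maximal linearly ordered subset. Two elements are incompatible if neither is below or equal to the other. *)

theory Defs
  imports Main "HOL-Library.Countable_Set"
begin

definition pred_set :: "'a set \<Rightarrow> 'a rel \<Rightarrow> 'a \<Rightarrow> 'a set" where
  "pred_set T R t = {s \<in> T. (s, t) \<in> R \<and> s \<noteq> t}"

text \<open>The height of a node, represented as the well-order of its strict predecessors
  (its order type is the height).\<close>
definition node_height :: "'a set \<Rightarrow> 'a rel \<Rightarrow> 'a \<Rightarrow> 'a rel" where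
  "node_height T R t = Restr R (pred_set T R t)"

definition is_tree :: "'a set \<Rightarrow> 'a rel \<Rightarrow> bool" where
  "is_tree T R \<longleftrightarrow> partial_order_on T R \<and>
     (\<forall>t\<in>T. Well_order (node_height T R t))"

definition tree_level :: "'a set \<Rightarrow> 'a rel \<Rightarrow> 'a \<Rightarrow> 'a set" where
  "tree_level T R t = {s \<in> T. (node_height T R s, node_height T R t) \<in> ordIso}"

text \<open>Height omega_1: every node has countable height, and every countable ordinal
  (= order type of a well-order on a subset of nat) is the height of some node.\<close>
definition height_omega1 :: "'a set \<Rightarrow> 'a rel \<Rightarrow> bool" where
  "height_omega1 T R \<longleftrightarrow>
     (\<forall>t\<in>T. countable (pred_set T R t)) \<and>
     (\<forall>W :: nat rel. Well_order W \<longrightarrow> (\<exists>t\<in>T. (node_height T R t, W) \<in> ordIso))"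

definition is_chain_in :: "'a set \<Rightarrow> 'a rel \<Rightarrow> 'a set \<Rightarrow> bool" where
  "is_chain_in T R c \<longleftrightarrow> c \<subseteq> T \<and> (\<forall>x\<in>c. \<forall>y\<in>c. (x, y) \<in> R \<or> (y, x) \<in> R)"

definition is_branch :: "'a set \<Rightarrow> 'a rel \<Rightarrow> 'a set \<Rightarrow> bool" where
  "is_branch T R b \<longleftrightarrow> is_chain_in T R b \<and>
     (\<forall>c. is_chain_in T R c \<and> b \<subseteq> c \<longrightarrow> c = b)"

definition aronszajn_tree :: "'a set \<Rightarrow> 'a rel \<Rightarrow> bool" where
  "aronszajn_tree T R \<longleftrightarrow> is_tree T R \<and> height_omega1 T R \<and>
     (\<forall>t\<in>T. countable (tree_level T R t)) \<and>
     (\<forall>b. is_branch T R b \<longrightarrow> countable b)"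

definition incompatible :: "'a rel \<Rightarrow> 'a \<Rightarrow> 'a \<Rightarrow> bool" where
  "incompatible R s t \<longleftrightarrow> (s, t) \<notin> R \<and> (t, s) \<notin> R"

end

theory Submission
  imports Defs
begin

text \<open>Let U be the set of nodes lying on uncountably many branches of B. It is closed
  downwards, and if the theorem failed it would be a chain, hence contained in a branch and
  countable. Every branch of B other than U leaves U at a node all of whose predecessors
  lie in U; such nodes have the same predecessors as U or as some node of U, so there are
  only countably many of them, each on only countably many branches of B. Hence B would be
  countable.\<close>

lemma tree_partial_order:
  assumes "is_tree T R"
  shows "refl_on T R" "trans R" "antisym R"
  using assms unfolding is_tree_def partial_order_on_def preorder_on_def by auto

lemma pred_set_trans:
  assumes "is_tree T R" "s \<in> pred_set T R t" "t \<in> pred_set T R u"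
  shows "s \<in> pred_set T R u"
proof -
  have "(s, u) \<in> R" using assms tree_partial_order(2)[OF assms(1)]
    unfolding pred_set_def by (blast dest: transD)
  moreover have "s \<noteq> u" using assms tree_partial_order(3)[OF assms(1)]
    unfolding pred_set_def by (blast dest: antisymD)
  ultimately show ?thesis using assms(2) unfolding pred_set_def by blast
qed

lemma tree_below_comparable:
  assumes tree: "is_tree T R" and "s \<in> T" "x \<in> T" "t \<in> T" "(s, t) \<in> R" "(x, t) \<in> R"
  shows "(s, x) \<in> R \<or> (x, s) \<in> R"
proof (cases "s = t \<or> x = t")
  case True
  then show ?thesis using assms by auto
next
  case False
  let ?W = "node_height T R t"
  have "total_on (Field ?W) ?W"
    using tree \<open>t \<in> T\<close> unfolding is_tree_def well_order_on_def linear_order_on_def by blast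
  moreover have "s \<in> Field ?W" "x \<in> Field ?W"
    using False assms refl_onD[OF tree_partial_order(1)[OF tree]]
    unfolding node_height_def pred_set_def Field_def by blast+
  ultimately have "s = x \<or> (s, x) \<in> ?W \<or> (x, s) \<in> ?W" unfolding total_on_def by blast
  then show ?thesis using assms refl_onD[OF tree_partial_order(1)[OF tree]]
    unfolding node_height_def by blast
qed

lemma tree_minimal_element:
  assumes tree: "is_tree T R" and "S \<subseteq> T" "x \<in> S"
  shows "\<exists>m\<in>S. pred_set T R m \<inter> S = {}"
proof (cases "pred_set T R x \<inter> S = {}")
  case True
  then show ?thesis using \<open>x \<in> S\<close> by blast
next
  case False
  let ?W = "node_height T R x"
  have "wf (?W - Id)"
    using tree assms(2,3) unfolding is_tree_def well_order_on_def by blast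
  then obtain z where z: "z \<in> pred_set T R x \<inter> S"
    and z_min: "\<And>y. (y, z) \<in> ?W - Id \<Longrightarrow> y \<notin> pred_set T R x \<inter> S"
    using False wfE_min by (metis all_not_in_conv)
  have "y \<notin> S" if "y \<in> pred_set T R z" for y
  proof
    assume "y \<in> S"
    moreover have "y \<in> pred_set T R x" using pred_set_trans[OF tree that] z by blast
    moreover have "(y, z) \<in> ?W - Id"
      using that z \<open>y \<in> pred_set T R x\<close> unfolding node_height_def pred_set_def by blast
    ultimately show False using z_min by blast
  qed
  then show ?thesis using z by blast
qed

lemma branch_downward_closed:
  assumes tree: "is_tree T R" and b: "is_branch T R b" and "t \<in> b" "s \<in> T" "(s, t) \<in> R"
  shows "s \<in> b"
proof -
  have chain: "is_chain_in T R b" using b unfolding is_branch_def by blast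
  then have "t \<in> T" using \<open>t \<in> b\<close> unfolding is_chain_in_def by blast
  have "(s, z) \<in> R \<or> (z, s) \<in> R" if "z \<in> b" for z
  proof -
    have "z \<in> T" "(z, t) \<in> R \<or> (t, z) \<in> R"
      using chain that \<open>t \<in> b\<close> unfolding is_chain_in_def by blast+
    then show ?thesis
      using tree_below_comparable[OF tree \<open>s \<in> T\<close> \<open>z \<in> T\<close> \<open>t \<in> T\<close> \<open>(s, t) \<in> R\<close>]
        tree_partial_order(2)[OF tree] \<open>(s, t) \<in> R\<close> by (blast dest: transD)
  qed
  then have "is_chain_in T R (insert s b)"
    using chain \<open>s \<in> T\<close> refl_onD[OF tree_partial_order(1)[OF tree]]
    unfolding is_chain_in_def by blast
  then show ?thesis using b unfolding is_branch_def by blast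
qed

lemma branches_through_antimono:
  assumes "is_tree T R" "\<forall>b\<in>B. is_branch T R b" "s \<in> T" "(s, u) \<in> R"
  shows "{b \<in> B. u \<in> b} \<subseteq> {b \<in> B. s \<in> b}"
  using branch_downward_closed[OF assms(1) _ _ assms(3,4)] assms(2) by blast

lemma chain_subset_branch:
  assumes "is_chain_in T R C"
  shows "\<exists>b. is_branch T R b \<and> C \<subseteq> b"
proof -
  let ?A = "{c. is_chain_in T R c \<and> C \<subseteq> c}"
  have "\<Union>\<C> \<in> ?A" if "\<C> \<noteq> {}" "subset.chain ?A \<C>" for \<C>
  proof -
    have chains: "\<And>X. X \<in> \<C> \<Longrightarrow> is_chain_in T R X \<and> C \<subseteq> X"
      and nested: "\<And>X Y. X \<in> \<C> \<Longrightarrow> Y \<in> \<C> \<Longrightarrow> X \<subseteq> Y \<or> Y \<subseteq> X"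
      using that(2) unfolding subset_chain_def by blast+
    have "is_chain_in T R (\<Union>\<C>)"
      unfolding is_chain_in_def
    proof (intro conjI ballI)
      show "\<Union>\<C> \<subseteq> T" using chains unfolding is_chain_in_def by blast
    next
      fix x y assume "x \<in> \<Union>\<C>" "y \<in> \<Union>\<C>"
      then obtain X Y where "X \<in> \<C>" "Y \<in> \<C>" "x \<in> X" "y \<in> Y" by blast
      then show "(x, y) \<in> R \<or> (y, x) \<in> R"
        using nested[of X Y] chains[of X] chains[of Y] unfolding is_chain_in_def by blast
    qed
    moreover have "C \<subseteq> \<Union>\<C>" using that(1) chains by blast
    ultimately show ?thesis by blast
  qed
  then obtain M where M: "M \<in> ?A" "\<forall>X\<in>?A. M \<subseteq> X \<longrightarrow> X = M"
    using subset_Zorn_nonempty[of ?A] assms by blast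
  then have "is_branch T R M" unfolding is_branch_def by blast
  then show ?thesis using M by blast
qed

lemma aronszajn_chain_countable:
  assumes "aronszajn_tree T R" "is_chain_in T R C"
  shows "countable C"
  using chain_subset_branch[OF assms(2)] assms(1) countable_subset
  unfolding aronszajn_tree_def by blast

lemma countable_nodes_with_pred_set_in:
  assumes tree: "is_tree T R" and levels: "\<forall>t\<in>T. countable (tree_level T R t)"
    and "countable \<P>"
  shows "countable {t \<in> T. pred_set T R t \<in> \<P>}"
proof -
  have fiber: "countable {t \<in> T. pred_set T R t = P}" for P
  proof (cases "{t \<in> T. pred_set T R t = P} = {}")
    case False
    then obtain t0 where t0: "t0 \<in> T" "pred_set T R t0 = P" by blast
    have "Well_order (node_height T R t0)" using tree t0(1) unfolding is_tree_def by blast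
    then have "{t \<in> T. pred_set T R t = P} \<subseteq> tree_level T R t0"
      using t0(2) ordIso_reflexive unfolding tree_level_def node_height_def by auto
    then show ?thesis using levels t0(1) countable_subset by blast
  qed (simp only: countable_empty)
  have "{t \<in> T. pred_set T R t \<in> \<P>} = (\<Union>P\<in>\<P>. {t \<in> T. pred_set T R t = P})" by blast
  then show ?thesis using \<open>countable \<P>\<close> fiber by simp
qed

lemma pred_set_below_downward_closed_chain:
  assumes tree: "is_tree T R" and chain: "is_chain_in T R U"
    and down: "\<forall>u\<in>U. \<forall>s\<in>T. (s, u) \<in> R \<longrightarrow> s \<in> U"
    and below: "pred_set T R t \<subseteq> U"
  shows "pred_set T R t \<in> insert U (pred_set T R ` U)"
proof (cases "U \<subseteq> pred_set T R t")
  case True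
  then show ?thesis using below by blast
next
  case False
  then obtain u where u: "u \<in> U - pred_set T R t"
    and u_min: "pred_set T R u \<inter> (U - pred_set T R t) = {}"
    using tree_minimal_element[OF tree, of "U - pred_set T R t"] chain
    unfolding is_chain_in_def by blast
  have "pred_set T R t = pred_set T R u"
  proof
    show "pred_set T R t \<subseteq> pred_set T R u"
    proof
      fix w assume w: "w \<in> pred_set T R t"
      then have "w \<in> U" "w \<noteq> u" using below u by blast+
      then have "(w, u) \<in> R \<or> (u, w) \<in> R" using chain u unfolding is_chain_in_def by blast
      moreover have "(u, w) \<notin> R"
      proof
        assume "(u, w) \<in> R"
        then have "u \<in> pred_set T R w"
          using \<open>w \<noteq> u\<close> u chain unfolding pred_set_def is_chain_in_def by blast
        then show False using pred_set_trans[OF tree _ w] u by blast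
      qed
      ultimately show "w \<in> pred_set T R u" using w \<open>w \<noteq> u\<close> unfolding pred_set_def by blast
    qed
  next
    show "pred_set T R u \<subseteq> pred_set T R t"
      using u u_min down unfolding pred_set_def by blast
  qed
  then show ?thesis using u by (metis DiffD1 image_eqI insertI2)
qed

lemma branch_first_node_outside:
  assumes tree: "is_tree T R" and b: "is_branch T R b" and "\<not> b \<subseteq> U"
  shows "\<exists>m\<in>b - U. pred_set T R m \<subseteq> U"
proof -
  have "b \<subseteq> T" using b unfolding is_branch_def is_chain_in_def by simp
  then obtain m where m: "m \<in> b - U" "pred_set T R m \<inter> (b - U) = {}"
    using tree_minimal_element[OF tree, of "b - U"] assms(3) by blast
  have "pred_set T R m \<subseteq> b"
    using branch_downward_closed[OF tree b] m(1) unfolding pred_set_def by blast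
  then show ?thesis using m by blast
qed

lemma aronszajn_branches_countable_off_chain:
  assumes aronszajn: "aronszajn_tree T R" and B: "\<forall>b\<in>B. is_branch T R b"
    and chain: "is_chain_in T R U"
    and down: "\<forall>u\<in>U. \<forall>s\<in>T. (s, u) \<in> R \<longrightarrow> s \<in> U"
    and off_chain: "\<And>t. t \<in> T - U \<Longrightarrow> countable {b \<in> B. t \<in> b}"
  shows "countable B"
proof -
  have tree: "is_tree T R" and levels: "\<forall>t\<in>T. countable (tree_level T R t)"
    using aronszajn unfolding aronszajn_tree_def by blast+
  define N where "N = {t \<in> T - U. pred_set T R t \<subseteq> U}"
  have "N \<subseteq> {t \<in> T. pred_set T R t \<in> insert U (pred_set T R ` U)}"
    using pred_set_below_downward_closed_chain[OF tree chain down] unfolding N_def by blast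
  moreover have "countable (insert U (pred_set T R ` U))"
    using aronszajn_chain_countable[OF aronszajn chain] by simp
  ultimately have "countable N"
    using countable_nodes_with_pred_set_in[OF tree levels] countable_subset by blast
  have "B \<subseteq> insert U (\<Union>t\<in>N. {b \<in> B. t \<in> b})"
  proof
    fix b assume "b \<in> B"
    then have b: "is_branch T R b" using B by blast
    show "b \<in> insert U (\<Union>t\<in>N. {b \<in> B. t \<in> b})"
    proof (cases "b \<subseteq> U")
      case True
      then show ?thesis using b chain unfolding is_branch_def by blast
    next
      case False
      then obtain m where "m \<in> b - U" "pred_set T R m \<subseteq> U"
        using branch_first_node_outside[OF tree b] by blast
      moreover have "b \<subseteq> T" using b unfolding is_branch_def is_chain_in_def by simp
      ultimately have "m \<in> N" "m \<in> b" unfolding N_def by blast+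
      then show ?thesis using \<open>b \<in> B\<close> by blast
    qed
  qed
  moreover have "countable (\<Union>t\<in>N. {b \<in> B. t \<in> b})"
    using \<open>countable N\<close> off_chain unfolding N_def by (intro countable_UN) auto
  ultimately show ?thesis by (metis countable_insert countable_subset)
qed

theorem lemma4p7:
  fixes T :: "'a set" and R :: "'a rel" and B :: "'a set set"
  assumes "aronszajn_tree T R"
    and "\<forall>b\<in>B. is_branch T R b"
    and "uncountable B"
    and "\<forall>b1\<in>B. \<forall>b2\<in>B. b1 \<noteq> b2 \<longrightarrow> (Restr R b1, Restr R b2) \<notin> ordIso"
  shows "\<exists>s\<in>T. \<exists>t\<in>T. incompatible R s t \<and>
           uncountable {b \<in> B. s \<in> b} \<and> uncountable {b \<in> B. t \<in> b}"
proof (rule ccontr)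
  assume no_split: "\<not> ?thesis"
  define U where "U = {t \<in> T. uncountable {b \<in> B. t \<in> b}}"
  have tree: "is_tree T R" using assms(1) unfolding aronszajn_tree_def by blast
  have "is_chain_in T R U"
    using no_split unfolding U_def is_chain_in_def incompatible_def by blast
  moreover have "\<forall>u\<in>U. \<forall>s\<in>T. (s, u) \<in> R \<longrightarrow> s \<in> U"
  proof (intro ballI impI)
    fix u s assume "u \<in> U" "s \<in> T" "(s, u) \<in> R"
    then have "{b \<in> B. u \<in> b} \<subseteq> {b \<in> B. s \<in> b}"
      using branches_through_antimono[OF tree assms(2)] by blast
    then show "s \<in> U" using \<open>u \<in> U\<close> \<open>s \<in> T\<close> countable_subset unfolding U_def by blast
  qed
  moreover have "countable {b \<in> B. t \<in> b}" if "t \<in> T - U" for t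
    using that unfolding U_def by blast
  ultimately have "countable B" by (rule aronszajn_branches_countable_off_chain[OF assms(1,2)])
  then show False using assms(3) by blast
qed

end
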